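(* Let $r\ge2$ be even. For any $n\ge r$, $A>0$ and $\lambda\in[0,1]$, there exists $f\in C^r[-1,1]$, nonnegative on $[-1,1]$ and identically $0$ on $[-1,-1/2]$, such that every algebraic polynomial $P_n$ of degree $\le n$ which is nonnegative on $(\lambda-1/n,\lambda)$ and satisfies $P_n^{(i)}(\lambda)=f^{(i)}(\lambda)$ for $0\le i\le r$ obeys $$\|f-P_n\|>A\,\|f^{(r)}\|.$$
   Context: $\|\cdot\|$ is the sup norm on $[-1,1]$. *)

theory Defs
  imports "HOL-Analysis.Analysis" "HOL-Computational_Algebra.Polynomial"
begin

definition supnorm :: "(real \<Rightarrow> real) \<Rightarrow> real" where
  "supnorm g = (SUP x\<in>{-1..1}. \<bar>g x\<bar>)"

definition Cr_with_derivs :: "nat \<Rightarrow> (real \<Rightarrow> real) \<Rightarrow> (nat \<Rightarrow> real \<Rightarrow> real) \<Rightarrow> bool" where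
  "Cr_with_derivs r f D \<longleftrightarrow>
     (\<forall>x\<in>{-1..1}. D 0 x = f x) \<and>
     (\<forall>k<r. \<forall>x\<in>{-1..1}. (D k has_real_derivative D (Suc k) x) (at x within {-1..1})) \<and>
     continuous_on {-1..1} (D r)"

end

theory Submission
  imports Defs
begin

(*
  Take f(x) = d^r H((x - lam) / d) with H(y) = y^(r-2) (1 - y^2)^(r+1) on [-1,1] and H = 0
  outside; H vanishes to order r + 1 at -1 and 1, so f is C^r. The norms of f and f^(r) are
  bounded independently of d, hence so is the norm of any P with |f - P| <= A |f^(r)|, and by
  the equivalence of norms on polynomials of degree <= n so is a bound K for |P^(r+1)| on
  [-1,1]. Taylor's formula for P at lam, whose r-jet is that of f, gives
  P(lam - d) <= d^r T(-1) + K d^(r+1), where T(y) = y^(r-2) - (r+1) y^r is the truncation of H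
  to degree r; as r is even, T(-1) = -r. Hence P(lam - d) < 0 once K d < r, although P must be
  nonnegative at lam - d in (lam - 1/n, lam) once d < 1/n.
*)

lemma has_real_derivative_cutoff:
  fixes f f' :: "real \<Rightarrow> real"
  assumes "\<And>y. (f has_real_derivative f' y) (at y)"
    and "f a = 0" "f b = 0" "f' a = 0" "f' b = 0"
  shows "((\<lambda>y. if y \<in> {a..b} then f y else 0) has_real_derivative
           (if x \<in> {a..b} then f' x else 0)) (at x)"
proof -
  have "((\<lambda>y. if y \<in> {a..b} then f y else 0) has_derivative
          (if x \<in> {a..b} then (*) (f' x) else (*) 0)) (at x within {a..b} \<union> - {a..b})"
  proof (rule has_derivative_If_within_closures)
    show "(f has_derivative (*) (f' x)) (at x within {a..b} \<union> closure {a..b} \<inter> closure (- {a..b}))"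
      using assms(1) by (auto simp: has_field_derivative_def intro: has_derivative_at_withinI)
    show "f x = 0" "(*) (f' x) = (*) 0" if "x \<in> closure {a..b}" "x \<in> closure (- {a..b})"
      using that assms by (auto simp: closure_complement)
  qed simp_all
  then show ?thesis
    by (cases "x \<in> {a..b}") (simp_all only: has_field_derivative_def Compl_partition if_True if_False)
qed

lemma continuous_on_cutoff:
  fixes f :: "real \<Rightarrow> real"
  assumes "continuous_on UNIV f" "f a = 0" "f b = 0"
  shows "continuous_on UNIV (\<lambda>y. if y \<in> {a..b} then f y else 0)"
proof -
  have clamp: "(\<lambda>y. if y \<in> {a..b} then f y else 0) = (\<lambda>y. f (max a (min b y)))"
    using assms(2,3) by (auto simp: max_def min_def)
  show ?thesis
    unfolding clamp by (intro continuous_on_compose2[OF assms(1)] continuous_intros) auto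
qed

lemma poly_bounded_on_compact:
  fixes p :: "real poly"
  assumes "compact S"
  shows "\<exists>B\<ge>0. \<forall>x\<in>S. \<bar>poly p x\<bar> \<le> B"
proof -
  have "bounded (poly p ` S)"
    using assms by (intro compact_imp_bounded compact_continuous_image) (auto intro: continuous_intros)
  then obtain B where "\<forall>x\<in>S. \<bar>poly p x\<bar> \<le> B"
    by (auto simp: bounded_iff)
  then show ?thesis
    by (intro exI[of _ "max B 0"]) auto
qed

lemma supnorm_le:
  assumes "\<forall>x\<in>{-1..1}. \<bar>g x\<bar> \<le> B"
  shows "supnorm g \<le> B"
  unfolding supnorm_def using assms by (intro cSUP_least) auto

lemma abs_le_supnorm:
  assumes "\<forall>y\<in>{-1..1}. \<bar>g y\<bar> \<le> B" "x \<in> {-1..1}"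
  shows "\<bar>g x\<bar> \<le> supnorm g"
  unfolding supnorm_def using assms by (intro cSUP_upper bdd_aboveI2) auto

lemma poly_bounded_by_supnorm_diff:
  fixes P :: "real poly"
  assumes "\<forall>y\<in>{-1..1}. \<bar>f y\<bar> \<le> B" "supnorm (\<lambda>y. f y - poly P y) \<le> E"
  shows "\<forall>x\<in>{-1..1}. \<bar>poly P x\<bar> \<le> B + E"
proof
  fix x :: real assume x: "x \<in> {-1..1}"
  obtain BP where "\<forall>y\<in>{-1..1}. \<bar>poly P y\<bar> \<le> BP"
    using poly_bounded_on_compact[of "{-1..1}" P] by auto
  then have "\<forall>y\<in>{-1..1}. \<bar>f y - poly P y\<bar> \<le> B + BP"
    using assms(1) by (fastforce intro: order_trans[OF abs_triangle_ineq4] add_mono)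
  then have "\<bar>f x - poly P x\<bar> \<le> supnorm (\<lambda>y. f y - poly P y)"
    using x by (rule abs_le_supnorm)
  moreover have "\<bar>f x\<bar> \<le> B"
    using assms(1) x by blast
  ultimately show "\<bar>poly P x\<bar> \<le> B + E"
    using assms(2) by linarith
qed

lemma pderiv_dvd_of_power_dvd:
  fixes p q :: "'a::{comm_semiring_1,semiring_no_zero_divisors} poly"
  assumes "q ^ Suc m dvd p"
  shows "q ^ m dvd pderiv p"
proof -
  obtain s where s: "p = q ^ Suc m * s"
    using assms by auto
  have "pderiv p = q ^ m * (q * pderiv s + smult (of_nat (Suc m)) (s * pderiv q))"
    unfolding s pderiv_mult pderiv_power_Suc by (simp add: algebra_simps)
  then show ?thesis by simp
qed

lemma higher_pderiv_dvd_of_power_dvd: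
  fixes p q :: "'a::{comm_semiring_1,semiring_no_zero_divisors} poly"
  assumes "q ^ m dvd p" "k \<le> m"
  shows "q ^ (m - k) dvd (pderiv ^^ k) p"
  using assms(2)
proof (induction k)
  case (Suc k)
  then have "q ^ Suc (m - Suc k) dvd (pderiv ^^ k) p"
    by (simp add: Suc_diff_Suc)
  then show ?case by (simp add: pderiv_dvd_of_power_dvd)
qed (use assms(1) in simp)

lemma poly_higher_pderiv_eq_0_of_power_dvd:
  fixes p q :: "'a::{comm_semiring_1,semiring_no_zero_divisors} poly"
  assumes "q ^ m dvd p" "k < m" "poly q a = 0"
  shows "poly ((pderiv ^^ k) p) a = 0"
proof -
  have "q dvd q ^ (m - k)"
    using assms(2) by (simp add: dvd_power)
  also have "q ^ (m - k) dvd (pderiv ^^ k) p"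
    using assms(1,2) by (simp add: higher_pderiv_dvd_of_power_dvd)
  finally show ?thesis
    using assms(3) by auto
qed

definition lagrange_basis :: "(nat \<Rightarrow> 'a::field) \<Rightarrow> nat \<Rightarrow> nat \<Rightarrow> 'a poly" where
  "lagrange_basis x n j =
     smult (1 / (\<Prod>m\<in>{..n}-{j}. x j - x m)) (\<Prod>m\<in>{..n}-{j}. [:- x m, 1:])"

lemma poly_lagrange_basis:
  assumes "inj_on x {..n}" "i \<le> n" "j \<le> n"
  shows "poly (lagrange_basis x n j) (x i) = (if i = j then 1 else 0)"
proof (cases "i = j")
  case True
  have "(\<Prod>m\<in>{..n}-{j}. x j - x m) \<noteq> 0"
    using assms by (auto dest: inj_onD)
  then show ?thesis
    using True by (simp add: lagrange_basis_def poly_prod)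
next
  case False
  then have "(\<Prod>m\<in>{..n}-{j}. poly [:- x m, 1:] (x i)) = 0"
    using assms(2) by (intro prod_zero) (auto intro!: bexI[of _ i])
  then show ?thesis
    using False by (simp add: lagrange_basis_def poly_prod)
qed

lemma degree_lagrange_basis:
  assumes "j \<le> n"
  shows "degree (lagrange_basis x n j) \<le> n"
proof -
  have "degree (\<Prod>m\<in>{..n}-{j}. [:- x m, 1:]) \<le> (\<Sum>m\<in>{..n}-{j}. 1)"
    by (rule order_trans[OF degree_prod_sum_le]) auto
  also have "\<dots> = n"
    using assms by simp
  finally show ?thesis
    unfolding lagrange_basis_def by (rule order_trans[OF degree_smult_le])
qed

lemma lagrange_interpolation:
  assumes "inj_on x {..n}" "degree P \<le> n"
  shows "P = (\<Sum>j\<le>n. smult (poly P (x j)) (lagrange_basis x n j))"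
proof (rule poly_eqI_degree[of "x ` {..n}"])
  have card: "card (x ` {..n}) = Suc n"
    using assms(1) by (simp add: card_image)
  show "degree P < card (x ` {..n})"
    using assms(2) card by simp
  have "degree (\<Sum>j\<le>n. smult (poly P (x j)) (lagrange_basis x n j)) \<le> n"
    by (intro degree_sum_le) (auto intro: order_trans[OF degree_smult_le] degree_lagrange_basis)
  then show "degree (\<Sum>j\<le>n. smult (poly P (x j)) (lagrange_basis x n j)) < card (x ` {..n})"
    using card by simp
next
  fix y assume "y \<in> x ` {..n}"
  then obtain i where i: "i \<le> n" "y = x i"
    by auto
  have "poly (\<Sum>j\<le>n. smult (poly P (x j)) (lagrange_basis x n j)) y
          = (\<Sum>j\<le>n. if i = j then poly P (x j) else 0)"
    unfolding poly_sum using i assms(1) by (intro sum.cong) (auto simp: poly_lagrange_basis)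
  then show "poly P y = poly (\<Sum>j\<le>n. smult (poly P (x j)) (lagrange_basis x n j)) y"
    using i by simp
qed

lemma higher_pderiv_bound:
  fixes a b :: real
  assumes "a < b"
  shows "\<exists>C\<ge>0. \<forall>P M x. degree P \<le> n \<longrightarrow> (\<forall>y\<in>{a..b}. \<bar>poly P y\<bar> \<le> M) \<longrightarrow> x \<in> {a..b} \<longrightarrow>
           \<bar>poly ((pderiv ^^ k) P) x\<bar> \<le> C * M"
proof -
  define node where "node j = a + (b - a) * (real j / real (Suc n))" for j
  have inj: "inj_on node {..n}"
    using assms by (intro inj_onI) (simp add: node_def)
  have node_in: "node j \<in> {a..b}" if "j \<le> n" for j
  proof -
    have "real j / real (Suc n) \<le> 1"
      using that by simp
    then show ?thesis
      using assms mult_left_le[of "real j / real (Suc n)" "b - a"] by (simp add: node_def)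
  qed
  have "\<forall>j. \<exists>B\<ge>0. \<forall>x\<in>{a..b}. \<bar>poly ((pderiv ^^ k) (lagrange_basis node n j)) x\<bar> \<le> B"
    by (blast intro: poly_bounded_on_compact)
  then obtain B where B: "\<And>j. B j \<ge> 0"
    "\<And>j x. x \<in> {a..b} \<Longrightarrow> \<bar>poly ((pderiv ^^ k) (lagrange_basis node n j)) x\<bar> \<le> B j"
    by metis
  show ?thesis
  proof (intro exI[of _ "\<Sum>j\<le>n. B j"] conjI allI impI)
    show "0 \<le> (\<Sum>j\<le>n. B j)"
      by (simp add: sum_nonneg B)
    fix P :: "real poly" and M x
    assume P: "degree P \<le> n" "\<forall>y\<in>{a..b}. \<bar>poly P y\<bar> \<le> M" and x: "x \<in> {a..b}"
    have "(pderiv ^^ k) P = (\<Sum>j\<le>n. smult (poly P (node j)) ((pderiv ^^ k) (lagrange_basis node n j)))"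
      by (subst lagrange_interpolation[OF inj P(1)]) (simp add: higher_pderiv_sum higher_pderiv_smult)
    then have "\<bar>poly ((pderiv ^^ k) P) x\<bar>
                 \<le> (\<Sum>j\<le>n. \<bar>poly P (node j)\<bar> * \<bar>poly ((pderiv ^^ k) (lagrange_basis node n j)) x\<bar>)"
      by (simp add: poly_sum sum_abs flip: abs_mult)
    also have "\<dots> \<le> (\<Sum>j\<le>n. M * B j)"
      using P(2) node_in B x by (intro sum_mono mult_mono) auto
    finally show "\<bar>poly ((pderiv ^^ k) P) x\<bar> \<le> (\<Sum>j\<le>n. B j) * M"
      by (simp add: sum_distrib_left mult.commute)
  qed
qed

lemma poly_taylor_left_le:
  fixes P :: "real poly"
  assumes "0 < d" "\<forall>t\<in>{c - d..c}. \<bar>poly ((pderiv ^^ Suc r) P) t\<bar> \<le> K"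
  shows "poly P (c - d) \<le> (\<Sum>m\<le>r. poly ((pderiv ^^ m) P) c / fact m * (- d) ^ m) + K * d ^ Suc r"
proof -
  have "\<exists>t. c - d < t \<and> t < c \<and>
    poly P (c - d) = (\<Sum>m<Suc r. poly ((pderiv ^^ m) P) c / fact m * (c - d - c) ^ m)
                      + poly ((pderiv ^^ Suc r) P) t / fact (Suc r) * (c - d - c) ^ Suc r"
    by (rule Taylor_down[where b = c]) (use assms(1) in simp_all)
  then obtain t where t: "c - d < t" "t < c" and taylor:
    "poly P (c - d) = (\<Sum>m\<le>r. poly ((pderiv ^^ m) P) c / fact m * (- d) ^ m)
                      + poly ((pderiv ^^ Suc r) P) t / fact (Suc r) * (- d) ^ Suc r"
    unfolding lessThan_Suc_atMost diff_diff_eq2 diff_add_cancel by (auto simp del: fact_Suc)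
  have "poly ((pderiv ^^ Suc r) P) t / fact (Suc r) * (- d) ^ Suc r
          \<le> \<bar>poly ((pderiv ^^ Suc r) P) t / fact (Suc r) * (- d) ^ Suc r\<bar>"
    by (rule abs_ge_self)
  also have "\<dots> = \<bar>poly ((pderiv ^^ Suc r) P) t\<bar> / fact (Suc r) * d ^ Suc r"
    unfolding abs_mult abs_divide power_abs using assms(1) by (simp del: fact_Suc)
  also have "\<dots> \<le> K * d ^ Suc r"
  proof (rule mult_right_mono)
    have "\<bar>poly ((pderiv ^^ Suc r) P) t\<bar> \<le> K"
      using assms(2) t by simp
    moreover have "\<bar>poly ((pderiv ^^ Suc r) P) t\<bar> / fact (Suc r) \<le> \<bar>poly ((pderiv ^^ Suc r) P) t\<bar> / 1"
      by (intro divide_left_mono) (auto simp del: fact_Suc)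
    ultimately show "\<bar>poly ((pderiv ^^ Suc r) P) t\<bar> / fact (Suc r) \<le> K"
      by simp
  qed (use assms(1) in simp)
  finally show ?thesis
    using taylor by linarith
qed

definition bump_poly :: "nat \<Rightarrow> real poly" where
  "bump_poly r = monom 1 (r - 2) * [:1, 0, -1:] ^ Suc r"

lemma poly_higher_pderiv_bump_poly_eq_0:
  assumes "k \<le> r" "y \<in> {-1, 1}"
  shows "poly ((pderiv ^^ k) (bump_poly r)) y = 0"
  using assms
  by (intro poly_higher_pderiv_eq_0_of_power_dvd[of "[:1, 0, -1:]" "Suc r"]) (auto simp: bump_poly_def)

lemma bump_poly_nonneg:
  assumes "even r" "\<bar>y\<bar> \<le> 1"
  shows "0 \<le> poly (bump_poly r) y"
proof -
  have "poly (bump_poly r) y = y ^ (r - 2) * (1 - y\<^sup>2) ^ Suc r"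
    by (simp add: bump_poly_def poly_monom power2_eq_square algebra_simps)
  moreover have "0 \<le> y ^ (r - 2)"
    using assms(1) by (simp add: zero_le_even_power)
  moreover have "y\<^sup>2 \<le> 1"
    using assms(2) by (simp add: abs_square_le_1)
  ultimately show ?thesis
    by simp
qed

lemma coeffs_one_minus_square_power:
  "coeff ([:1, 0, -1:] ^ m :: real poly) 0 = 1 \<and> coeff ([:1, 0, -1:] ^ m :: real poly) 1 = 0 \<and>
   coeff ([:1, 0, -1:] ^ m :: real poly) 2 = - real m"
  by (induction m) (simp_all add: mult_pCons_left coeff_pCons numeral_2_eq_2 algebra_simps)

lemma bump_poly_alternating_coeff_sum:
  assumes "even r" "2 \<le> r"
  shows "(\<Sum>m\<le>r. coeff (bump_poly r) m * (-1) ^ m) = - real r"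
proof -
  have coeff: "coeff (bump_poly r) m * (-1) ^ m
                 = (if m = r - 2 then 1 else 0) - (if m = r then real r + 1 else 0)" if m_le: "m \<le> r" for m
  proof -
    have c: "coeff (bump_poly r) m =
        (if m < r - 2 then 0 else coeff ([:1, 0, -1:] ^ Suc r :: real poly) (m - (r - 2)))"
      unfolding bump_poly_def coeff_monom_mult by simp
    consider "m < r - 2" | "m = r - 2" | "m = r - 1" | "m = r"
      using m_le assms(2) by linarith
    then show ?thesis
    proof cases
      case 1
      then show ?thesis using c assms by auto
    next
      case 2
      then show ?thesis
        using c assms coeffs_one_minus_square_power[of "Suc r"] by (simp add: neg_one_even_power)
    next
      case 3
      then have "m - (r - 2) = 1" "m \<noteq> r" "m \<noteq> r - 2"
        using assms by auto
      then show ?thesis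
        using c coeffs_one_minus_square_power[of "Suc r"] by simp
    next
      case 4
      then have "m - (r - 2) = 2" "m \<noteq> r - 2"
        using assms by auto
      then show ?thesis
        using c 4 assms coeffs_one_minus_square_power[of "Suc r"] by (simp add: neg_one_even_power)
    qed
  qed
  have "(\<Sum>m\<le>r. coeff (bump_poly r) m * (-1) ^ m)
          = (\<Sum>m\<le>r. (if m = r - 2 then 1 else 0) - (if m = r then real r + 1 else 0))"
    using coeff by (intro sum.cong) auto
  also have "\<dots> = - real r"
    using assms by (simp add: sum_subtractf)
  finally show ?thesis .
qed

(* For k <= r, bump_derivs r d c k is the k-th derivative of x |-> d^r H((x - c) / d),
   where H is bump_poly r cut off outside [-1,1]. *)
definition bump_derivs :: "nat \<Rightarrow> real \<Rightarrow> real \<Rightarrow> nat \<Rightarrow> real \<Rightarrow> real" where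
  "bump_derivs r d c k x =
     d ^ (r - k) * (if (x - c) / d \<in> {-1..1} then poly ((pderiv ^^ k) (bump_poly r)) ((x - c) / d) else 0)"

lemma has_real_derivative_bump_derivs:
  assumes "k < r" "0 < d"
  shows "(bump_derivs r d c k has_real_derivative bump_derivs r d c (Suc k) x) (at x)"
proof -
  define Q where "Q = (pderiv ^^ k) (bump_poly r)"
  have cut: "((\<lambda>y. if y \<in> {-1..1} then poly Q y else 0) has_real_derivative
               (if y \<in> {-1..1} then poly (pderiv Q) y else 0)) (at y)" for y
    using assms(1) poly_higher_pderiv_bump_poly_eq_0[of k r] poly_higher_pderiv_bump_poly_eq_0[of "Suc k" r]
    by (intro has_real_derivative_cutoff) (auto simp: Q_def)
  have scale: "((\<lambda>x. (x - c) / d) has_real_derivative 1 / d) (at x)"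
    using assms(2) by (auto intro!: derivative_eq_intros)
  have "r - k = Suc (r - Suc k)"
    using assms(1) by simp
  then have next_deriv: "bump_derivs r d c (Suc k) x
      = d ^ (r - k) * ((if (x - c) / d \<in> {-1..1} then poly (pderiv Q) ((x - c) / d) else 0) * (1 / d))"
    using assms(2) by (simp add: bump_derivs_def Q_def)
  have this_deriv: "bump_derivs r d c k =
      (\<lambda>x. d ^ (r - k) * (if (x - c) / d \<in> {-1..1} then poly Q ((x - c) / d) else 0))"
    by (simp add: fun_eq_iff bump_derivs_def Q_def)
  show ?thesis
    unfolding this_deriv next_deriv by (intro DERIV_cmult DERIV_chain2[OF cut scale])
qed

lemma continuous_on_bump_derivs:
  assumes "k \<le> r" "0 < d"
  shows "continuous_on UNIV (bump_derivs r d c k)"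
proof -
  define Q where "Q = (pderiv ^^ k) (bump_poly r)"
  have cut: "continuous_on UNIV (\<lambda>y. if y \<in> {-1..1} then poly Q y else 0)"
    using assms unfolding Q_def
    by (intro continuous_on_cutoff continuous_on_poly continuous_on_id poly_higher_pderiv_bump_poly_eq_0) simp_all
  have eq: "bump_derivs r d c k =
      (\<lambda>x. d ^ (r - k) * (if (x - c) / d \<in> {-1..1} then poly Q ((x - c) / d) else 0))"
    by (simp add: fun_eq_iff bump_derivs_def Q_def)
  show ?thesis
    unfolding eq using assms(2)
    by (intro continuous_on_mult continuous_on_const continuous_on_compose2[OF cut] continuous_intros) auto
qed

lemma Cr_with_derivs_bump_derivs:
  assumes "0 < d"
  shows "Cr_with_derivs r (bump_derivs r d c 0) (bump_derivs r d c)"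
  unfolding Cr_with_derivs_def
proof (intro conjI ballI allI impI)
  show "(bump_derivs r d c k has_real_derivative bump_derivs r d c (Suc k) x) (at x within {-1..1})"
    if "k < r" for k x
    using has_real_derivative_bump_derivs[OF that assms] by (rule has_field_derivative_at_within)
  show "continuous_on {-1..1} (bump_derivs r d c r)"
    using continuous_on_bump_derivs[OF order_refl assms] by (rule continuous_on_subset) simp
qed simp

lemma bump_derivs_nonneg:
  assumes "even r"
  shows "0 \<le> bump_derivs r d c 0 x"
proof -
  have "0 \<le> poly (bump_poly r) y" if "y \<in> {-1..1}" for y
    using assms that by (intro bump_poly_nonneg) auto
  then show ?thesis
    using assms by (simp add: bump_derivs_def zero_le_even_power del: atLeastAtMost_iff)
qed

lemma bump_derivs_eq_0:
  assumes "0 < d" "d < \<bar>x - c\<bar>"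
  shows "bump_derivs r d c k x = 0"
proof -
  have "1 < \<bar>(x - c) / d\<bar>"
    using assms by (simp add: abs_divide)
  then show ?thesis
    by (auto simp: bump_derivs_def abs_le_iff)
qed

lemma bump_derivs_at_center:
  "bump_derivs r d c k c = d ^ (r - k) * (fact k * coeff (bump_poly r) k)"
  by (simp add: bump_derivs_def poly_0_coeff_0 coeff_higher_pderiv pochhammer_fact)

lemma bump_derivs_bounded:
  "\<exists>B\<ge>0. \<forall>d c x. 0 < d \<longrightarrow> d \<le> 1 \<longrightarrow> \<bar>bump_derivs r d c k x\<bar> \<le> B"
proof -
  obtain B where B: "0 \<le> B" "\<forall>y\<in>{-1..1}. \<bar>poly ((pderiv ^^ k) (bump_poly r)) y\<bar> \<le> B"
    using poly_bounded_on_compact[of "{-1..1}"] by blast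
  have "\<bar>bump_derivs r d c k x\<bar> \<le> B" if "0 < d" "d \<le> 1" for d c x
  proof -
    let ?y = "(x - c) / d"
    have cut: "\<bar>if ?y \<in> {-1..1} then poly ((pderiv ^^ k) (bump_poly r)) ?y else 0\<bar> \<le> B"
      using B by simp
    have "d ^ (r - k) \<le> 1"
      using that by (simp add: power_le_one)
    then have "d ^ (r - k) * \<bar>if ?y \<in> {-1..1} then poly ((pderiv ^^ k) (bump_poly r)) ?y else 0\<bar>
                 \<le> \<bar>if ?y \<in> {-1..1} then poly ((pderiv ^^ k) (bump_poly r)) ?y else 0\<bar>"
      using that by (intro mult_left_le_one_le) auto
    then show ?thesis
      using cut that by (simp add: bump_derivs_def abs_mult)
  qed
  then show ?thesis
    using B(1) by blast
qed

lemma poly_negative_left_of_bump: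
  fixes P :: "real poly"
  assumes "even r" "2 \<le> r" "0 < d" "K * d < real r"
    and "\<forall>m\<le>r. poly ((pderiv ^^ m) P) c = bump_derivs r d c m c"
    and "\<forall>t\<in>{c - d..c}. \<bar>poly ((pderiv ^^ Suc r) P) t\<bar> \<le> K"
  shows "poly P (c - d) < 0"
proof -
  have "(\<Sum>m\<le>r. poly ((pderiv ^^ m) P) c / fact m * (- d) ^ m)
          = d ^ r * (\<Sum>m\<le>r. coeff (bump_poly r) m * (-1) ^ m)"
    unfolding sum_distrib_left
  proof (rule sum.cong)
    fix m assume m: "m \<in> {..r}"
    then have "d ^ (r - m) * d ^ m = d ^ r"
      by (simp flip: power_add)
    then show "poly ((pderiv ^^ m) P) c / fact m * (- d) ^ m = d ^ r * (coeff (bump_poly r) m * (-1) ^ m)"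
      using assms(5) m by (simp add: bump_derivs_at_center power_minus[of d] mult_ac)
  qed simp
  also have "\<dots> = - real r * d ^ r"
    using bump_poly_alternating_coeff_sum[OF assms(1,2)] by simp
  finally have "poly P (c - d) \<le> - real r * d ^ r + K * d ^ Suc r"
    using poly_taylor_left_le[OF assms(3,6)] by linarith
  also have "\<dots> = d ^ r * (K * d - real r)"
    by (simp add: algebra_simps)
  also have "\<dots> < 0"
    using assms(3,4) by (simp add: mult_pos_neg)
  finally show ?thesis .
qed

theorem lemma3p6:
  fixes r n :: nat and A lam :: real
  assumes "even r" and "r \<ge> 2" and "n \<ge> r" and "A > 0" and "lam \<in> {0..1}"
  shows "\<exists>f D. Cr_with_derivs r f D \<and>
           (\<forall>x\<in>{-1..1}. f x \<ge> 0) \<and>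
           (\<forall>x\<in>{-1..-1/2}. f x = 0) \<and>
           (\<forall>P :: real poly. degree P \<le> n \<longrightarrow>
              (\<forall>x\<in>{lam - 1 / real n<..<lam}. poly P x \<ge> 0) \<longrightarrow>
              (\<forall>i\<le>r. poly ((pderiv ^^ i) P) lam = D i lam) \<longrightarrow>
              supnorm (\<lambda>x. f x - poly P x) > A * supnorm (D r))"
proof -
  obtain B0 where B0: "0 \<le> B0" "\<forall>d c x. 0 < d \<longrightarrow> d \<le> 1 \<longrightarrow> \<bar>bump_derivs r d c 0 x\<bar> \<le> B0"
    using bump_derivs_bounded by blast
  obtain Br where Br: "0 \<le> Br" "\<forall>d c x. 0 < d \<longrightarrow> d \<le> 1 \<longrightarrow> \<bar>bump_derivs r d c r x\<bar> \<le> Br"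
    using bump_derivs_bounded by blast
  obtain C where C: "0 \<le> C" "\<forall>(P :: real poly) M x. degree P \<le> n \<longrightarrow>
      (\<forall>y\<in>{-1..1}. \<bar>poly P y\<bar> \<le> M) \<longrightarrow> x \<in> {-1..1} \<longrightarrow> \<bar>poly ((pderiv ^^ Suc r) P) x\<bar> \<le> C * M"
    using higher_pderiv_bound[of "-1" 1 n "Suc r"] by auto
  define K where "K = C * (B0 + A * Br)"
  define d where "d = 1 / (K + real n + 2)"
  have "0 \<le> K"
    using B0 Br C assms(4) by (simp add: K_def)
  then have "K * d < 1" and d: "0 < d" "d < 1 / real n" "d < 1 / 2"
    using assms(2,3) by (simp_all add: d_def field_simps)
  then have "K * d < real r"
    using assms(2) by linarith
  define D where "D = bump_derivs r d lam"
  have "A * supnorm (D r) < supnorm (\<lambda>x. D 0 x - poly P x)"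
    if deg: "degree P \<le> n" and nonneg: "\<forall>x\<in>{lam - 1 / real n<..<lam}. 0 \<le> poly P x"
      and interp: "\<forall>i\<le>r. poly ((pderiv ^^ i) P) lam = D i lam" for P
  proof (rule ccontr)
    assume "\<not> ?thesis"
    moreover have "A * supnorm (D r) \<le> A * Br"
      using Br d assms(4) by (intro mult_left_mono supnorm_le) (auto simp: D_def)
    ultimately have "supnorm (\<lambda>x. D 0 x - poly P x) \<le> A * Br"
      by linarith
    then have "\<forall>y\<in>{-1..1}. \<bar>poly P y\<bar> \<le> B0 + A * Br"
      using B0 d by (intro poly_bounded_by_supnorm_diff) (auto simp: D_def)
    then have "\<bar>poly ((pderiv ^^ Suc r) P) t\<bar> \<le> K" if "t \<in> {lam - d..lam}" for t
      using C(2) deg that assms(5) d unfolding K_def by auto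
    then have "poly P (lam - d) < 0"
      using poly_negative_left_of_bump[of r d K P lam] assms(1,2) d \<open>K * d < real r\<close> interp
      by (simp add: D_def)
    moreover have "lam - d \<in> {lam - 1 / real n<..<lam}"
      using d by auto
    ultimately show False
      using nonneg by fastforce
  qed
  moreover have "D 0 x = 0" if "x \<in> {-1..-1/2}" for x
    using that assms(5) d by (auto simp: D_def intro: bump_derivs_eq_0)
  ultimately show ?thesis
    using Cr_with_derivs_bump_derivs[OF d(1)] bump_derivs_nonneg[OF assms(1)]
    by (intro exI[of _ "D 0"] exI[of _ D]) (auto simp: D_def)
qed

end
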